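(* Let $P$ be a simplicial poset of rank $n+1$. Then $$\Theta(\Psi(P))=[n]!\cdot h(P),$$ where $h(P)$ is the $h$-polynomial of $P$.
   Context: A graded poset $P$ with minimum $\hat0$, maximum $\hat1$ and rank function $\rho$ is simplicial if for every $x<\hat1$ the interval $[\hat0,x]$ is isomorphic to the Boolean algebra of rank $\rho(x)$. For $P$ of rank $n+1$, let $f_0=1$ and, for $1\le i\le n$, $f_i$ be the number of elements of rank $i$; the $h$-polynomial is $h(P)=\sum_{i=0}^n f_i\, q^i(1-q)^{n-i}$. The $\mathbf{a}\mathbf{b}$-index is $\Psi(P)=\sum_{S\subseteq\{1,\dots,n\}} f_S\, v_S$, where for $S=\{s_1<\cdots<s_k\}$, $f_S$ is the number of chains $\hat0<x_1<\cdots<x_k<\hat1$ with $\rho(x_i)=s_i$, and $v_S=v_1\cdots v_n$ with $v_i=\mathbf{b}$ if $i\in S$, $v_i=\mathbf{a}-\mathbf{b}$ otherwise ($\mathbf{a},\mathbf{b}$ non-commuting variables). The Major MacMahon map $\Theta:\mathbb{Z}\langle\mathbf{a},\mathbf{b}\rangle\to\mathbb{Z}[q]$ is linear with $\Theta(u_1\cdots u_n)=\prod_{i:\,u_i=\mathbf{b}}q^i$ on monomials. $[m]=1+q+\cdots+q^{m-1}$, $[m]!=[m]\cdots[1]$, $[0]!=1$. *)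

theory Defs
  imports "HOL-Computational_Algebra.Polynomial"
begin

definition poset_on :: "'a set \<Rightarrow> ('a \<Rightarrow> 'a \<Rightarrow> bool) \<Rightarrow> bool" where
  "poset_on X le \<longleftrightarrow>
     (\<forall>x\<in>X. le x x) \<and>
     (\<forall>x\<in>X. \<forall>y\<in>X. le x y \<and> le y x \<longrightarrow> x = y) \<and>
     (\<forall>x\<in>X. \<forall>y\<in>X. \<forall>z\<in>X. le x y \<and> le y z \<longrightarrow> le x z)"

definition covers :: "'a set \<Rightarrow> ('a \<Rightarrow> 'a \<Rightarrow> bool) \<Rightarrow> 'a \<Rightarrow> 'a \<Rightarrow> bool" where
  "covers X le x y \<longleftrightarrow> x \<in> X \<and> y \<in> X \<and> le x y \<and> x \<noteq> y \<and>
     \<not> (\<exists>z\<in>X. le x z \<and> le z y \<and> z \<noteq> x \<and> z \<noteq> y)"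

definition graded_poset ::
  "'a set \<Rightarrow> ('a \<Rightarrow> 'a \<Rightarrow> bool) \<Rightarrow> 'a \<Rightarrow> 'a \<Rightarrow> ('a \<Rightarrow> nat) \<Rightarrow> nat \<Rightarrow> bool" where
  "graded_poset X le zero one rho n \<longleftrightarrow>
     finite X \<and> poset_on X le \<and> zero \<in> X \<and> one \<in> X \<and>
     (\<forall>x\<in>X. le zero x \<and> le x one) \<and>
     rho zero = 0 \<and> rho one = n + 1 \<and>
     (\<forall>x y. covers X le x y \<longrightarrow> rho y = rho x + 1)"

definition interval_below :: "'a set \<Rightarrow> ('a \<Rightarrow> 'a \<Rightarrow> bool) \<Rightarrow> 'a \<Rightarrow> 'a \<Rightarrow> 'a set" where
  "interval_below X le zero x = {y\<in>X. le zero y \<and> le y x}"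

definition boolean_interval :: "'a set \<Rightarrow> ('a \<Rightarrow> 'a \<Rightarrow> bool) \<Rightarrow> 'a \<Rightarrow> 'a \<Rightarrow> nat \<Rightarrow> bool" where
  "boolean_interval X le zero x k \<longleftrightarrow>
     (\<exists>f. bij_betw f (interval_below X le zero x) (Pow {..<k}) \<and>
          (\<forall>y\<in>interval_below X le zero x. \<forall>z\<in>interval_below X le zero x.
              le y z \<longleftrightarrow> f y \<subseteq> f z))"

definition simplicial_poset ::
  "'a set \<Rightarrow> ('a \<Rightarrow> 'a \<Rightarrow> bool) \<Rightarrow> 'a \<Rightarrow> 'a \<Rightarrow> ('a \<Rightarrow> nat) \<Rightarrow> nat \<Rightarrow> bool" where
  "simplicial_poset X le zero one rho n \<longleftrightarrow>
     graded_poset X le zero one rho n \<and>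
     (\<forall>x\<in>X. x \<noteq> one \<longrightarrow> boolean_interval X le zero x (rho x))"

definition fvec :: "'a set \<Rightarrow> ('a \<Rightarrow> nat) \<Rightarrow> nat \<Rightarrow> nat" where
  "fvec X rho i = (if i = 0 then 1 else card {x\<in>X. rho x = i})"

definition hpoly :: "'a set \<Rightarrow> ('a \<Rightarrow> nat) \<Rightarrow> nat \<Rightarrow> int poly" where
  "hpoly X rho n = (\<Sum>i=0..n. of_nat (fvec X rho i) * [:0,1:] ^ i * [:1,-1:] ^ (n - i))"

text \<open>Number of chains \<open>\<hat>0 < x_1 < \<dots> < x_k < \<hat>1\<close> with \<open>\<rho>(x_i) = s_i\<close>, counted
  as the sets \<open>{x_1,\<dots>,x_k}\<close> (a chain with distinct ranks is determined by its set).\<close>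
definition flag_f :: "'a set \<Rightarrow> ('a \<Rightarrow> 'a \<Rightarrow> bool) \<Rightarrow> 'a \<Rightarrow> 'a \<Rightarrow> ('a \<Rightarrow> nat) \<Rightarrow> nat set \<Rightarrow> nat" where
  "flag_f X le zero one rho S = card {C. C \<subseteq> X - {zero, one} \<and>
       (\<forall>x\<in>C. \<forall>y\<in>C. le x y \<or> le y x) \<and> rho ` C = S \<and> card C = card S}"

text \<open>An element of \<open>\<int>\<langle>a,b\<rangle>\<close> is a coefficient function on words; letter False = a,
  True = b.\<close>
type_synonym abpoly = "bool list \<Rightarrow> int"

definition ab_one :: abpoly where "ab_one w = (if w = [] then 1 else 0)"
definition ab_a :: abpoly where "ab_a w = (if w = [False] then 1 else 0)"
definition ab_b :: abpoly where "ab_b w = (if w = [True] then 1 else 0)"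
definition ab_minus :: "abpoly \<Rightarrow> abpoly \<Rightarrow> abpoly" where "ab_minus p r w = p w - r w"
definition ab_mult :: "abpoly \<Rightarrow> abpoly \<Rightarrow> abpoly" where
  "ab_mult p r w = (\<Sum>i\<le>length w. p (take i w) * r (drop i w))"
definition ab_prod :: "abpoly list \<Rightarrow> abpoly" where
  "ab_prod ps = foldr ab_mult ps ab_one"

definition vS :: "nat \<Rightarrow> nat set \<Rightarrow> abpoly" where
  "vS n S = ab_prod (map (\<lambda>i. if i \<in> S then ab_b else ab_minus ab_a ab_b) [1..<n+1])"

definition abindex ::
  "'a set \<Rightarrow> ('a \<Rightarrow> 'a \<Rightarrow> bool) \<Rightarrow> 'a \<Rightarrow> 'a \<Rightarrow> ('a \<Rightarrow> nat) \<Rightarrow> nat \<Rightarrow> abpoly" where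
  "abindex X le zero one rho n =
     (\<lambda>w. \<Sum>S\<in>Pow {1..n}. int (flag_f X le zero one rho S) * vS n S w)"

text \<open>Major MacMahon map: linear, monomial \<open>u_1\<cdots>u_m \<mapsto> \<Prod>_{u_i = b} q^i\<close> (1-based positions).
  Applied to finitely supported coefficient functions.\<close>
definition Theta :: "abpoly \<Rightarrow> int poly" where
  "Theta p = (\<Sum>w\<in>{w. p w \<noteq> 0}.
      smult (p w) (monom 1 (\<Sum>i\<in>{i. i < length w \<and> w ! i}. i + 1)))"

definition qint :: "nat \<Rightarrow> int poly" where "qint m = (\<Sum>j<m. monom 1 j)"
definition qfact :: "nat \<Rightarrow> int poly" where "qfact m = (\<Prod>j=1..m. qint j)"

end

theory Submission
  imports Defs
begin

text \<open>
  The MacMahon map sends \<open>v\<^sub>S\<close> to \<open>w\<^sub>n(S) = \<Prod>\<^sub>i\<^sub>\<in>\<^sub>S q\<^sup>i \<Prod>\<^sub>i\<^sub>\<notin>\<^sub>S (1 - q\<^sup>i)\<close>: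
  \<open>v\<^sub>S\<close> is a product of linear forms sitting in distinct positions, and \<open>\<Theta>\<close> weights
  the letter \<open>b\<close> in position \<open>i\<close> by \<open>q\<^sup>i\<close>. Hence \<open>\<Theta>(\<Psi>(P)) = \<Sum>\<^sub>S f\<^sub>S w\<^sub>n(S)\<close>.

  In a simplicial poset a chain whose top element \<open>x\<close> has rank \<open>k\<close> lies in
  \<open>[\<hat>0,x] \<cong> B\<^sub>k\<close>, so \<open>f\<^bsub>T \<union> {k}\<^esub> = f\<^sub>k \<beta>\<^sub>k(T)\<close> for \<open>T \<subseteq> [k-1]\<close>, where \<open>\<beta>\<^sub>k\<close> is the
  flag \<open>f\<close>-vector of the Boolean algebra \<open>B\<^sub>k\<close>. Splitting \<open>\<Sum>\<^sub>S f\<^sub>S w\<^sub>n(S)\<close> according to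
  \<open>max S\<close> yields a recursion in \<open>n\<close> whose solution is \<open>[n]! h(P)\<close>, provided that
  \<open>\<Sum>\<^sub>T \<beta>\<^sub>k\<^sub>+\<^sub>1(T) w\<^sub>k(T) = [k+1]!\<close> for \<open>k < n\<close>. That identity is the theorem for
  \<open>B\<^sub>k\<^sub>+\<^sub>1\<close> itself, whose \<open>h\<close>-polynomial is \<open>\<Sum>\<^sub>i C(k+1,i) q\<^sup>i (1-q)\<^sup>k\<^sup>-\<^sup>i = [k+1]\<close>, so it follows
  from the same recursion by induction on \<open>k\<close>.
\<close>

section \<open>The MacMahon map of the \<open>ab\<close>-index\<close>

definition qX :: "int poly" where "qX = [:0, 1:]"

definition flag_weight :: "nat \<Rightarrow> nat set \<Rightarrow> int poly" where
  "flag_weight n S = (\<Prod>i=1..n. if i \<in> S then qX ^ i else 1 - qX ^ i)"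

definition ab_lin :: "int \<Rightarrow> int \<Rightarrow> abpoly" where
  "ab_lin a b w = (if w = [False] then a else if w = [True] then b else 0)"

lemma ab_b_eq_ab_lin: "ab_b = ab_lin 0 1"
  by (rule ext) (auto simp: ab_b_def ab_lin_def)

lemma ab_minus_ab_a_ab_b_eq_ab_lin: "ab_minus ab_a ab_b = ab_lin 1 (-1)"
  by (rule ext) (auto simp: ab_a_def ab_b_def ab_minus_def ab_lin_def)

lemma ab_mult_ab_lin_Nil: "ab_mult (ab_lin a b) p [] = 0"
  by (simp add: ab_mult_def ab_lin_def)

lemma ab_mult_ab_lin_Cons: "ab_mult (ab_lin a b) p (x # w) = (if x then b else a) * p w"
proof -
  have "ab_mult (ab_lin a b) p (x # w)
      = (\<Sum>i\<le>length (x # w). if i = 1 then (if x then b else a) * p w else 0)"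
    unfolding ab_mult_def
    by (rule sum.cong) (auto simp: ab_lin_def take_Cons' take_eq_Nil split: nat.split)
  also have "\<dots> = (if x then b else a) * p w"
    by (simp only: sum.delta finite_atMost) simp
  finally show ?thesis .
qed

fun lin_coeff :: "(int \<times> int) list \<Rightarrow> bool list \<Rightarrow> int" where
  "lin_coeff [] [] = 1"
| "lin_coeff ((a, b) # ps) (x # w) = (if x then b else a) * lin_coeff ps w"
| "lin_coeff _ _ = 0"

lemma lin_coeff_length: "lin_coeff ps w \<noteq> 0 \<Longrightarrow> length w = length ps"
  by (induction ps w rule: lin_coeff.induct) auto

lemma ab_prod_ab_lin: "ab_prod (map (\<lambda>(a, b). ab_lin a b) ps) = lin_coeff ps"
proof (induction ps)
  case Nil
  show ?case by (rule ext) (auto simp: ab_prod_def ab_one_def neq_Nil_conv)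
next
  case (Cons p ps)
  obtain a b where p: "p = (a, b)" by force
  show ?case
  proof (rule ext)
    fix w show "ab_prod (map (\<lambda>(a, b). ab_lin a b) (p # ps)) w = lin_coeff (p # ps) w"
      using Cons by (cases w) (auto simp: p ab_prod_def ab_mult_ab_lin_Nil ab_mult_ab_lin_Cons)
  qed
qed

fun b_index_sum :: "nat \<Rightarrow> bool list \<Rightarrow> nat" where
  "b_index_sum k [] = 0"
| "b_index_sum k (x # w) = (if x then Suc k else 0) + b_index_sum (Suc k) w"

lemma sum_b_positions: "(\<Sum>i | i < length w \<and> w ! i. i + 1 + k) = b_index_sum k w"
proof (induction w arbitrary: k)
  case Nil
  then show ?case by simp
next
  case (Cons x w)
  have positions: "{i. i < length (x # w) \<and> (x # w) ! i}
      = (if x then insert 0 else id) (Suc ` {i. i < length w \<and> w ! i})"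
  proof (rule set_eqI)
    fix i
    show "i \<in> {i. i < length (x # w) \<and> (x # w) ! i}
        \<longleftrightarrow> i \<in> (if x then insert 0 else id) (Suc ` {i. i < length w \<and> w ! i})"
      by (cases i) auto
  qed
  have "(\<Sum>i\<in>Suc ` {i. i < length w \<and> w ! i}. i + 1 + k) = b_index_sum (Suc k) w"
    by (subst sum.reindex) (auto simp: Cons[symmetric])
  then show ?case
    by (subst positions, cases x) auto
qed

fun lin_theta :: "nat \<Rightarrow> (int \<times> int) list \<Rightarrow> int poly" where
  "lin_theta k [] = 1"
| "lin_theta k (p # ps) = ([:fst p:] + smult (snd p) (qX ^ Suc k)) * lin_theta (Suc k) ps"

lemma finite_lists_length: "finite {w :: bool list. length w = m}"
  using finite_lists_length_eq[of "UNIV :: bool set" m] by simp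

lemma sum_lin_coeff:
  "(\<Sum>w | length w = length ps. smult (lin_coeff ps w) (qX ^ b_index_sum k w)) = lin_theta k ps"
proof (induction ps arbitrary: k)
  case Nil
  have "{w :: bool list. length w = 0} = {[]}" by auto
  then show ?case by simp
next
  case (Cons p ps)
  obtain a b where p: "p = (a, b)" by force
  have words: "{w :: bool list. length w = length (p # ps)}
      = (\<lambda>(w, x). x # w) ` ({w. length w = length ps} \<times> UNIV)"
    using lists_length_Suc_eq[of UNIV "length ps"] by auto
  have inj: "inj_on (\<lambda>(w, x). x # w) ({w :: bool list. length w = length ps} \<times> UNIV)"
    by (auto intro: inj_onI)
  have "(\<Sum>w | length w = length (p # ps). smult (lin_coeff (p # ps) w) (qX ^ b_index_sum k w))
     = (\<Sum>w | length w = length ps. \<Sum>x\<in>UNIV.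
          smult (lin_coeff (p # ps) (x # w)) (qX ^ b_index_sum k (x # w)))"
    unfolding words sum.reindex[OF inj] by (simp add: sum.cartesian_product case_prod_unfold)
  also have "\<dots> = (\<Sum>w | length w = length ps.
      ([:a:] + smult b (qX ^ Suc k)) * smult (lin_coeff ps w) (qX ^ b_index_sum (Suc k) w))"
    by (simp add: p UNIV_bool power_add algebra_simps)
  also have "\<dots> = lin_theta k (p # ps)"
    by (simp only: p lin_theta.simps fst_conv snd_conv Cons[symmetric] sum_distrib_left)
  finally show ?case .
qed

lemma Theta_eq_sum:
  assumes "finite A" "\<And>w. p w \<noteq> 0 \<Longrightarrow> w \<in> A"
  shows "Theta p = (\<Sum>w\<in>A. smult (p w) (qX ^ b_index_sum 0 w))"
proof -
  have monom_eq: "monom 1 (\<Sum>i | i < length w \<and> w ! i. i + 1) = qX ^ b_index_sum 0 w" for w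
    using sum_b_positions[where w = w and k = 0] by (simp add: monom_altdef qX_def)
  show ?thesis
    unfolding Theta_def monom_eq using assms by (intro sum.mono_neutral_left) auto
qed

lemma smult_sum_right: "smult a (\<Sum>x\<in>A. f x) = (\<Sum>x\<in>A. smult a (f x))"
  by (induction A rule: infinite_finite_induct) (auto simp: smult_add_right)

lemma Theta_sum:
  assumes "finite I" "finite A" "\<And>i w. i \<in> I \<Longrightarrow> p i w \<noteq> 0 \<Longrightarrow> w \<in> A"
  shows "Theta (\<lambda>w. \<Sum>i\<in>I. c i * p i w) = (\<Sum>i\<in>I. smult (c i) (Theta (p i)))"
proof -
  have "Theta (\<lambda>w. \<Sum>i\<in>I. c i * p i w) = (\<Sum>w\<in>A. smult (\<Sum>i\<in>I. c i * p i w) (qX ^ b_index_sum 0 w))"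
    using assms by (intro Theta_eq_sum) (auto elim: sum.not_neutral_contains_not_neutral)
  also have "\<dots> = (\<Sum>i\<in>I. smult (c i) (\<Sum>w\<in>A. smult (p i w) (qX ^ b_index_sum 0 w)))"
    by (simp add: smult_sum smult_sum_right) (rule sum.swap)
  also have "\<dots> = (\<Sum>i\<in>I. smult (c i) (Theta (p i)))"
    using assms by (simp add: Theta_eq_sum)
  finally show ?thesis .
qed

lemma lin_theta_upt:
  "lin_theta k (map c [Suc k..<Suc k + m])
    = (\<Prod>i=Suc k..k + m. [:fst (c i):] + smult (snd (c i)) (qX ^ i))"
proof (induction m arbitrary: k)
  case 0
  then show ?case by simp
next
  case (Suc m)
  let ?g = "\<lambda>i. [:fst (c i):] + smult (snd (c i)) (qX ^ i)"
  have upt_eq: "[Suc k..<Suc k + Suc m] = Suc k # [Suc (Suc k)..<Suc (Suc k) + m]"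
    by (simp add: upt_conv_Cons)
  have prod_eq: "(\<Prod>i=Suc k..k + Suc m. ?g i) = ?g (Suc k) * (\<Prod>i=Suc (Suc k)..Suc k + m. ?g i)"
    by (subst prod.atLeast_Suc_atMost) auto
  show ?case
    by (simp only: upt_eq prod_eq list.map lin_theta.simps Suc.IH)
qed

lemma vS_eq_lin_coeff: "vS n S = lin_coeff (map (\<lambda>i. if i \<in> S then (0, 1) else (1, -1)) [1..<n+1])"
proof -
  have "map (\<lambda>i. if i \<in> S then ab_b else ab_minus ab_a ab_b) [1..<n+1]
      = map (\<lambda>(a, b). ab_lin a b) (map (\<lambda>i. if i \<in> S then (0, 1) else (1, -1)) [1..<n+1])"
    by (simp only: ab_minus_ab_a_ab_b_eq_ab_lin) (simp add: ab_b_eq_ab_lin)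
  then show ?thesis
    unfolding vS_def by (simp only: ab_prod_ab_lin)
qed

lemma vS_length: "vS n S w \<noteq> 0 \<Longrightarrow> length w = n"
  using lin_coeff_length by (fastforce simp: vS_eq_lin_coeff)

lemma Theta_vS: "Theta (vS n S) = flag_weight n S"
proof -
  let ?c = "\<lambda>i. if i \<in> S then (0, 1) else (1, -1) :: int \<times> int"
  let ?ps = "map ?c [1..<n+1]"
  have "Theta (vS n S) = (\<Sum>w | length w = n. smult (vS n S w) (qX ^ b_index_sum 0 w))"
    by (rule Theta_eq_sum) (auto simp: finite_lists_length vS_length)
  also have "\<dots> = lin_theta 0 ?ps"
    using sum_lin_coeff[where ps = ?ps and k = 0] by (simp add: vS_eq_lin_coeff del: upt.simps)
  also have "\<dots> = (\<Prod>i=1..n. [:fst (?c i):] + smult (snd (?c i)) (qX ^ i))"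
    using lin_theta_upt[where k = 0 and m = n and c = ?c] by (simp del: upt.simps)
  also have "\<dots> = flag_weight n S"
    unfolding flag_weight_def by (rule prod.cong) auto
  finally show ?thesis .
qed

lemma Theta_abindex:
  "Theta (abindex X le zero one rho n)
    = (\<Sum>S\<in>Pow {1..n}. of_nat (flag_f X le zero one rho S) * flag_weight n S)"
proof -
  have "Theta (abindex X le zero one rho n)
      = (\<Sum>S\<in>Pow {1..n}. smult (int (flag_f X le zero one rho S)) (Theta (vS n S)))"
    unfolding abindex_def
    by (rule Theta_sum[where A = "{w. length w = n}"]) (auto simp: finite_lists_length vS_length)
  then show ?thesis
    by (simp add: Theta_vS of_nat_poly)
qed

section \<open>Chains with prescribed ranks\<close>

definition rank_chains :: "('a \<Rightarrow> 'a \<Rightarrow> bool) \<Rightarrow> 'a set \<Rightarrow> ('a \<Rightarrow> nat) \<Rightarrow> nat set \<Rightarrow> 'a set set" where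
  "rank_chains le A r T =
     {C. C \<subseteq> A \<and> (\<forall>x\<in>C. \<forall>y\<in>C. le x y \<or> le y x) \<and> r ` C = T \<and> card C = card T}"

lemma flag_f_eq_card_rank_chains:
  "flag_f X le zero one rho S = card (rank_chains le (X - {zero, one}) rho S)"
  by (simp add: flag_f_def rank_chains_def)

lemma rank_chains_empty: "rank_chains le A r {} = {{}}"
  by (auto simp: rank_chains_def)

lemma finite_rank_chains: "finite A \<Longrightarrow> finite (rank_chains le A r T)"
  by (rule finite_subset[of _ "Pow A"]) (auto simp: rank_chains_def)

lemma rank_chains_cong:
  assumes "{a \<in> A. r a \<in> T} = {b \<in> B. r b \<in> T}"
  shows "rank_chains le A r T = rank_chains le B r T"
proof -
  have "C \<subseteq> A \<longleftrightarrow> C \<subseteq> B" if "r ` C = T" for C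
    using that assms by (auto simp: set_eq_iff)
  then show ?thesis
    unfolding rank_chains_def by blast
qed

lemma bij_betw_rank_chains:
  assumes f: "bij_betw f A B"
    and le: "\<And>x y. x \<in> A \<Longrightarrow> y \<in> A \<Longrightarrow> le' (f x) (f y) \<longleftrightarrow> le x y"
    and r: "\<And>x. x \<in> A \<Longrightarrow> r' (f x) = r x"
  shows "bij_betw (image f) (rank_chains le A r T) (rank_chains le' B r' T)"
proof (rule bij_betw_subset[OF bij_betw_Pow[OF f]])
  show "rank_chains le A r T \<subseteq> Pow A"
    by (auto simp: rank_chains_def)
  have preserved: "C \<in> rank_chains le A r T \<longleftrightarrow> f ` C \<in> rank_chains le' B r' T" if C: "C \<subseteq> A" for C
  proof -
    have "card (f ` C) = card C"
      using f C by (meson bij_betw_imp_inj_on card_image inj_on_subset)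
    moreover have "r' ` f ` C = r ` C"
      unfolding image_image using r C by (intro image_cong) auto
    moreover have "(\<forall>x\<in>f ` C. \<forall>y\<in>f ` C. le' x y \<or> le' y x) \<longleftrightarrow> (\<forall>x\<in>C. \<forall>y\<in>C. le x y \<or> le y x)"
      using le C by (auto simp: subset_iff)
    moreover have "f ` C \<subseteq> B"
      using f C by (auto simp: bij_betw_def)
    ultimately show ?thesis
      using C by (simp add: rank_chains_def)
  qed
  show "image f ` rank_chains le A r T = rank_chains le' B r' T"
  proof
    show "image f ` rank_chains le A r T \<subseteq> rank_chains le' B r' T"
    proof (rule image_subsetI)
      fix C assume C: "C \<in> rank_chains le A r T"
      then have "C \<subseteq> A" by (simp add: rank_chains_def)
      then show "f ` C \<in> rank_chains le' B r' T" using preserved C by blast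
    qed
    show "rank_chains le' B r' T \<subseteq> image f ` rank_chains le A r T"
    proof
      fix E assume E: "E \<in> rank_chains le' B r' T"
      then have "E \<in> image f ` Pow A"
        using bij_betw_Pow[OF f] by (auto simp: rank_chains_def bij_betw_def)
      then obtain C where "C \<subseteq> A" "E = f ` C" by blast
      then show "E \<in> image f ` rank_chains le A r T"
        using preserved E by blast
    qed
  qed
qed

lemma rank_chains_remove_top:
  assumes A: "finite A"
    and mono: "\<And>a b. a \<in> A \<Longrightarrow> b \<in> A \<Longrightarrow> le a b \<Longrightarrow> a \<noteq> b \<Longrightarrow> r a < r b"
    and T: "finite T" "\<forall>t\<in>T. t < j"
    and C: "C \<in> rank_chains le A r (insert j T)"
  obtains x where "x \<in> C" "r x = j" "C - {x} \<in> rank_chains le {a \<in> A. le a x} r T"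
proof -
  have jT: "j \<notin> T" using T by auto
  have CA: "C \<subseteq> A" and chain: "\<forall>x\<in>C. \<forall>y\<in>C. le x y \<or> le y x"
    and rC: "r ` C = insert j T" and cC: "card C = card (insert j T)"
    using C by (simp_all add: rank_chains_def)
  have finC: "finite C" using CA A by (rule finite_subset)
  have inj: "inj_on r C" using rC cC finC by (intro eq_card_imp_inj_on) simp_all
  obtain x where x: "x \<in> C" "r x = j" using rC by (metis imageE insertI1)
  have rD: "r ` (C - {x}) = T"
    using inj x rC jT by (subst inj_on_image_set_diff) auto
  have cD: "card (C - {x}) = card T"
    using x cC finC jT T by (simp add: card_Diff_singleton)
  have "le d x" if d: "d \<in> C - {x}" for d
  proof (rule ccontr)
    assume "\<not> le d x"
    then have "le x d" using chain d x by auto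
    then have "r x < r d" using mono CA d x by auto
    moreover have "r d \<in> T" using rD d by blast
    ultimately show False using T x by auto
  qed
  then have "C - {x} \<in> rank_chains le {a \<in> A. le a x} r T"
    using CA chain rD cD by (auto simp: rank_chains_def)
  with x show ?thesis by (rule that)
qed

lemma rank_chains_insert:
  assumes A: "finite A"
    and refl: "\<And>a. a \<in> A \<Longrightarrow> le a a"
    and mono: "\<And>a b. a \<in> A \<Longrightarrow> b \<in> A \<Longrightarrow> le a b \<Longrightarrow> a \<noteq> b \<Longrightarrow> r a < r b"
    and T: "finite T" "\<forall>t\<in>T. t < j"
  shows "rank_chains le A r (insert j T)
    = (\<Union>x\<in>{x \<in> A. r x = j}. insert x ` rank_chains le {a \<in> A. le a x} r T)"
proof (rule set_eqI, rule iffI)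
  fix C assume C: "C \<in> rank_chains le A r (insert j T)"
  obtain x where x: "x \<in> C" "r x = j" and D: "C - {x} \<in> rank_chains le {a \<in> A. le a x} r T"
    by (rule rank_chains_remove_top[where le = le and r = r, OF A mono T C])
  moreover have "x \<in> A" using C x by (auto simp: rank_chains_def)
  moreover have "C = insert x (C - {x})" using x by auto
  ultimately show "C \<in> (\<Union>x\<in>{x \<in> A. r x = j}. insert x ` rank_chains le {a \<in> A. le a x} r T)"
    by blast
next
  fix C assume "C \<in> (\<Union>x\<in>{x \<in> A. r x = j}. insert x ` rank_chains le {a \<in> A. le a x} r T)"
  then obtain x D where x: "x \<in> A" "r x = j" and C: "C = insert x D"
    and DA: "D \<subseteq> A" and below: "\<forall>d\<in>D. le d x" and chain: "\<forall>a\<in>D. \<forall>b\<in>D. le a b \<or> le b a"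
    and rD: "r ` D = T" and cD: "card D = card T"
    by (auto simp: rank_chains_def)
  have "x \<notin> D" using x rD T by auto
  moreover have "finite D" using DA A by (rule finite_subset)
  moreover have "\<forall>a\<in>C. \<forall>b\<in>C. le a b \<or> le b a" using C chain below refl x by blast
  ultimately show "C \<in> rank_chains le A r (insert j T)"
    using C x DA rD cD T by (auto simp: rank_chains_def)
qed

lemma card_UN_insert_image:
  assumes "finite I" "\<And>x. x \<in> I \<Longrightarrow> finite (G x)"
    and fresh: "\<And>x y D. x \<in> I \<Longrightarrow> y \<in> I \<Longrightarrow> D \<in> G y \<Longrightarrow> x \<notin> D"
  shows "card (\<Union>x\<in>I. insert x ` G x) = (\<Sum>x\<in>I. card (G x))"
proof -
  have "card (\<Union>x\<in>I. insert x ` G x) = (\<Sum>x\<in>I. card (insert x ` G x))"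
  proof (rule card_UN_disjoint)
    show "\<forall>x\<in>I. \<forall>y\<in>I. x \<noteq> y \<longrightarrow> insert x ` G x \<inter> insert y ` G y = {}"
    proof (intro ballI impI)
      fix x y assume xy: "x \<in> I" "y \<in> I" "x \<noteq> y"
      have "insert x D \<noteq> insert y E" if "E \<in> G y" for D E
        using fresh[OF xy(1,2) that] xy(3) by blast
      then show "insert x ` G x \<inter> insert y ` G y = {}" by blast
    qed
  qed (use assms in auto)
  also have "\<dots> = (\<Sum>x\<in>I. card (G x))"
  proof (rule sum.cong[OF refl])
    fix x assume "x \<in> I"
    then have "inj_on (insert x) (G x)"
      using fresh by (intro inj_onI) (metis insert_ident)
    then show "card (insert x ` G x) = card (G x)" by (rule card_image)
  qed
  finally show ?thesis .
qed

lemma card_rank_chains_insert: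
  assumes A: "finite A"
    and refl: "\<And>a. a \<in> A \<Longrightarrow> le a a"
    and mono: "\<And>a b. a \<in> A \<Longrightarrow> b \<in> A \<Longrightarrow> le a b \<Longrightarrow> a \<noteq> b \<Longrightarrow> r a < r b"
    and T: "finite T" "\<forall>t\<in>T. t < j"
  shows "card (rank_chains le A r (insert j T))
    = (\<Sum>x\<in>{x \<in> A. r x = j}. card (rank_chains le {a \<in> A. le a x} r T))"
proof -
  have "rank_chains le A r (insert j T)
      = (\<Union>x\<in>{x \<in> A. r x = j}. insert x ` rank_chains le {a \<in> A. le a x} r T)"
    by (rule rank_chains_insert) (use assms in auto)
  also have "card \<dots> = (\<Sum>x\<in>{x \<in> A. r x = j}. card (rank_chains le {a \<in> A. le a x} r T))"
  proof (rule card_UN_insert_image)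
    show "finite {x \<in> A. r x = j}" using A by simp
    show "finite (rank_chains le {a \<in> A. le a x} r T)" for x
      using A by (simp add: finite_rank_chains)
    show "x \<notin> D" if "x \<in> {x \<in> A. r x = j}" "D \<in> rank_chains le {a \<in> A. le a y} r T" for x y D
      using that T by (auto simp: rank_chains_def)
  qed
  finally show ?thesis .
qed

section \<open>Boolean algebras\<close>

definition boolean_flag_f :: "nat \<Rightarrow> nat set \<Rightarrow> nat" where
  "boolean_flag_f k T = card (rank_chains (\<subseteq>) (Pow {..<k}) card T)"

lemma boolean_flag_f_empty: "boolean_flag_f k {} = 1"
  by (simp add: boolean_flag_f_def rank_chains_empty)

lemma card_rank_chains_Pow:
  assumes "finite A"
  shows "card (rank_chains (\<subseteq>) (Pow A) card T) = boolean_flag_f (card A) T"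
proof -
  obtain g where g: "bij_betw g A {..<card A}"
    using ex_bij_betw_finite_nat[OF assms] by (auto simp: atLeast0LessThan)
  then have inj: "inj_on g A" by (rule bij_betw_imp_inj_on)
  have "bij_betw (image (image g)) (rank_chains (\<subseteq>) (Pow A) card T)
      (rank_chains (\<subseteq>) (Pow {..<card A}) card T)"
  proof (rule bij_betw_rank_chains[OF bij_betw_Pow[OF g]])
    fix B C assume B: "B \<in> Pow A" and C: "C \<in> Pow A"
    show "g ` B \<subseteq> g ` C \<longleftrightarrow> B \<subseteq> C"
    proof
      assume sub: "g ` B \<subseteq> g ` C"
      show "B \<subseteq> C"
      proof
        fix x assume "x \<in> B"
        then have "g x \<in> g ` C" "x \<in> A" using sub B by auto
        then show "x \<in> C" using inj_on_image_mem_iff[OF inj] C by blast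
      qed
    qed (rule image_mono)
  next
    fix B assume "B \<in> Pow A"
    then show "card (g ` B) = card B"
      using inj by (meson PowD card_image inj_on_subset)
  qed
  then show ?thesis
    unfolding boolean_flag_f_def by (rule bij_betw_same_card)
qed

lemma boolean_flag_f_insert:
  assumes "finite T" "\<forall>t\<in>T. t < j"
  shows "boolean_flag_f k (insert j T) = (k choose j) * boolean_flag_f j T"
proof -
  have card_mono: "card B < card C" if "C \<subseteq> {..<k}" "B \<subseteq> C" "B \<noteq> C" for B C :: "nat set"
    using that by (meson finite_lessThan finite_subset psubset_card_mono psubsetI)
  have "boolean_flag_f k (insert j T)
      = (\<Sum>B\<in>{B \<in> Pow {..<k}. card B = j}. card (rank_chains (\<subseteq>) {C \<in> Pow {..<k}. C \<subseteq> B} card T))"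
    unfolding boolean_flag_f_def using assms card_mono by (intro card_rank_chains_insert) auto
  also have "\<dots> = (\<Sum>B\<in>{B \<in> Pow {..<k}. card B = j}. boolean_flag_f j T)"
  proof (rule sum.cong[OF refl])
    fix B assume B: "B \<in> {B \<in> Pow {..<k}. card B = j}"
    then have "{C \<in> Pow {..<k}. C \<subseteq> B} = Pow B" by auto
    moreover have "finite B" using B finite_subset[OF _ finite_lessThan] by auto
    ultimately show "card (rank_chains (\<subseteq>) {C \<in> Pow {..<k}. C \<subseteq> B} card T) = boolean_flag_f j T"
      using B card_rank_chains_Pow by auto
  qed
  also have "\<dots> = (k choose j) * boolean_flag_f j T"
    using n_subsets[of "{..<k}" j] by (simp add: Pow_def)
  finally show ?thesis .
qed

section \<open>The recursion for \<open>\<Sum>\<^sub>S f\<^sub>S w\<^sub>n(S)\<close>\<close>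

definition h_sum :: "(nat \<Rightarrow> nat) \<Rightarrow> nat \<Rightarrow> int poly" where
  "h_sum f m = (\<Sum>i=0..m. of_nat (f i) * qX ^ i * (1 - qX) ^ (m - i))"

lemma hpoly_eq_h_sum: "hpoly X rho n = h_sum (fvec X rho) n"
  by (simp add: hpoly_def h_sum_def qX_def one_pCons)

lemma one_minus_qX_mult_qint: "(1 - qX) * qint m = 1 - qX ^ m"
  using one_diff_power_eq[of qX m] by (simp add: qint_def monom_altdef qX_def)

lemma one_minus_qX_nonzero: "1 - qX \<noteq> 0"
proof
  assume "1 - qX = 0"
  then have "coeff (1 - qX) 1 = 0" by simp
  then show False by (simp add: qX_def)
qed

lemma qfact_Suc: "qfact (Suc m) = qint (Suc m) * qfact m"
  by (simp add: qfact_def prod.cl_ivl_Suc mult.commute)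

lemma h_sum_Suc: "h_sum f (Suc m) = (1 - qX) * h_sum f m + of_nat (f (Suc m)) * qX ^ Suc m"
  by (simp add: h_sum_def sum_distrib_left Suc_diff_le algebra_simps)

lemma h_sum_binomial: "h_sum (\<lambda>i. Suc k choose i) k = qint (Suc k)"
proof -
  have "(1 - qX) * h_sum (\<lambda>i. Suc k choose i) k
      = (\<Sum>i=0..k. of_nat (Suc k choose i) * qX ^ i * (1 - qX) ^ (Suc k - i))"
    by (simp add: h_sum_def sum_distrib_left Suc_diff_le algebra_simps)
  also have "\<dots> = (qX + (1 - qX)) ^ Suc k - qX ^ Suc k"
    unfolding binomial_ring by (simp add: atLeast0AtMost)
  also have "\<dots> = (1 - qX) * qint (Suc k)"
    by (simp add: one_minus_qX_mult_qint)
  finally show ?thesis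
    using one_minus_qX_nonzero by simp
qed

lemma flag_weight_Suc:
  assumes "S \<subseteq> {1..m}"
  shows "flag_weight (Suc m) S = (1 - qX ^ Suc m) * flag_weight m S"
  using assms by (auto simp: flag_weight_def prod.cl_ivl_Suc)

lemma flag_weight_Suc_insert:
  assumes "S \<subseteq> {1..m}"
  shows "flag_weight (Suc m) (insert (Suc m) S) = qX ^ Suc m * flag_weight m S"
proof -
  have "flag_weight m (insert (Suc m) S) = flag_weight m S"
    unfolding flag_weight_def by (rule prod.cong) auto
  moreover have "Suc m \<notin> S" using assms by auto
  ultimately show ?thesis
    by (simp add: flag_weight_def prod.cl_ivl_Suc)
qed

lemma sum_Pow_insert:
  assumes "finite A" "a \<notin> A"
  shows "(\<Sum>S\<in>Pow (insert a A). g S) = (\<Sum>S\<in>Pow A. g S) + (\<Sum>S\<in>Pow A. g (insert a S))"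
proof -
  have "inj_on (insert a) (Pow A)"
    using assms(2) by (intro inj_onI) (metis PowD insert_ident subsetD)
  then show ?thesis
    unfolding Pow_insert using assms
    by (subst sum.union_disjoint) (auto simp: sum.reindex)
qed

lemma sum_flag_weight_Suc:
  "(\<Sum>S\<in>Pow {1..Suc m}. g S * flag_weight (Suc m) S)
    = (1 - qX ^ Suc m) * (\<Sum>S\<in>Pow {1..m}. g S * flag_weight m S)
      + qX ^ Suc m * (\<Sum>T\<in>Pow {1..m}. g (insert (Suc m) T) * flag_weight m T)"
proof -
  have "{1..Suc m} = insert (Suc m) {1..m}" by auto
  then have "(\<Sum>S\<in>Pow {1..Suc m}. g S * flag_weight (Suc m) S)
      = (\<Sum>S\<in>Pow {1..m}. g S * flag_weight (Suc m) S)
        + (\<Sum>T\<in>Pow {1..m}. g (insert (Suc m) T) * flag_weight (Suc m) (insert (Suc m) T))"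
    by (simp add: sum_Pow_insert)
  also have "\<dots> = (1 - qX ^ Suc m) * (\<Sum>S\<in>Pow {1..m}. g S * flag_weight m S)
      + qX ^ Suc m * (\<Sum>T\<in>Pow {1..m}. g (insert (Suc m) T) * flag_weight m T)"
    unfolding sum_distrib_left
    by (intro arg_cong2[where f = "(+)"] sum.cong refl)
      (simp_all add: flag_weight_Suc flag_weight_Suc_insert mult.left_commute)
  finally show ?thesis .
qed

lemma sum_flag_weight_eq_qfact_h_sum:
  fixes F :: "nat set \<Rightarrow> nat" and f :: "nat \<Rightarrow> nat"
  assumes empty: "F {} = 1" "f 0 = 1"
    and insert: "\<And>j T. 1 \<le> j \<Longrightarrow> j \<le> M \<Longrightarrow> T \<subseteq> {1..<j} \<Longrightarrow>
      F (insert j T) = f j * boolean_flag_f j T"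
    and boolean: "\<And>j. j < M \<Longrightarrow>
      (\<Sum>T\<in>Pow {1..j}. of_nat (boolean_flag_f (Suc j) T) * flag_weight j T) = qfact (Suc j)"
  shows "m \<le> M \<Longrightarrow> (\<Sum>S\<in>Pow {1..m}. of_nat (F S) * flag_weight m S) = qfact m * h_sum f m"
proof (induction m)
  case 0
  then show ?case using empty by (simp add: flag_weight_def qfact_def h_sum_def)
next
  case (Suc m)
  have "(\<Sum>T\<in>Pow {1..m}. of_nat (F (insert (Suc m) T)) * flag_weight m T)
      = (\<Sum>T\<in>Pow {1..m}. of_nat (f (Suc m)) * (of_nat (boolean_flag_f (Suc m) T) * flag_weight m T))"
  proof (rule sum.cong[OF refl])
    fix T assume "T \<in> Pow {1..m}"
    then have "F (insert (Suc m) T) = f (Suc m) * boolean_flag_f (Suc m) T"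
      using Suc.prems by (intro insert) auto
    then show "of_nat (F (insert (Suc m) T)) * flag_weight m T
        = of_nat (f (Suc m)) * (of_nat (boolean_flag_f (Suc m) T) * flag_weight m T)"
      by simp
  qed
  also have "\<dots> = of_nat (f (Suc m)) * qfact (Suc m)"
    using boolean[of m] Suc.prems by (simp only: sum_distrib_left[symmetric])
  finally show ?case
    unfolding sum_flag_weight_Suc h_sum_Suc qfact_Suc one_minus_qX_mult_qint[symmetric]
    using Suc by (simp add: algebra_simps)
qed

lemma sum_boolean_flag_f_flag_weight:
  "(\<Sum>T\<in>Pow {1..k}. of_nat (boolean_flag_f (Suc k) T) * flag_weight k T) = qfact (Suc k)"
proof (induction k rule: less_induct)
  case (less k)
  \<comment> \<open>The recursion for \<open>B\<^sub>k\<^sub>+\<^sub>1\<close> (where \<open>f\<^sub>i = C(k+1,i)\<close>) only involves smaller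
    Boolean algebras.\<close>
  have "(\<Sum>T\<in>Pow {1..k}. of_nat (boolean_flag_f (Suc k) T) * flag_weight k T)
      = qfact k * h_sum (\<lambda>i. Suc k choose i) k"
    using less by (intro sum_flag_weight_eq_qfact_h_sum[where M = k])
      (auto simp: boolean_flag_f_empty intro!: boolean_flag_f_insert
        intro: finite_subset[OF _ finite_atLeastLessThan])
  then show ?case by (simp add: h_sum_binomial qfact_Suc mult.commute)
qed

section \<open>Simplicial posets\<close>

locale simplicial =
  fixes X :: "'a set" and le :: "'a \<Rightarrow> 'a \<Rightarrow> bool" and zero one :: 'a
    and rho :: "'a \<Rightarrow> nat" and n :: nat
  assumes simplicial_poset: "simplicial_poset X le zero one rho n"
begin

lemma finite_X: "finite X"
  and zero_in_X: "zero \<in> X"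
  and zero_le: "x \<in> X \<Longrightarrow> le zero x"
  and refl_le: "x \<in> X \<Longrightarrow> le x x"
  and trans_le: "x \<in> X \<Longrightarrow> y \<in> X \<Longrightarrow> z \<in> X \<Longrightarrow> le x y \<Longrightarrow> le y z \<Longrightarrow> le x z"
  and rho_zero: "rho zero = 0"
  and rho_one: "rho one = n + 1"
  and rho_cover: "covers X le x y \<Longrightarrow> rho y = rho x + 1"
  and boolean_below: "x \<in> X \<Longrightarrow> x \<noteq> one \<Longrightarrow> boolean_interval X le zero x (rho x)"
  using simplicial_poset
  unfolding simplicial_poset_def graded_poset_def poset_on_def by blast+

context
  fixes x :: 'a and f :: "'a \<Rightarrow> nat set" and k :: nat
  assumes x: "x \<in> X"
    and f: "bij_betw f (interval_below X le zero x) (Pow {..<k})"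
    and f_iso: "\<And>y z. y \<in> interval_below X le zero x \<Longrightarrow> z \<in> interval_below X le zero x \<Longrightarrow>
      le y z \<longleftrightarrow> f y \<subseteq> f z"
begin

lemma covers_in_boolean_interval:
  assumes y: "y \<in> interval_below X le zero x" and z: "z \<in> interval_below X le zero x"
    and fy: "f y = insert b (f z)" and b: "b \<notin> f z"
  shows "covers X le z y"
proof -
  let ?I = "interval_below X le zero x"
  have inj: "inj_on f ?I" using f by (rule bij_betw_imp_inj_on)
  have no_between: "\<not> (le z w \<and> le w y \<and> w \<noteq> z \<and> w \<noteq> y)" if w: "w \<in> X" for w
  proof
    assume between: "le z w \<and> le w y \<and> w \<noteq> z \<and> w \<noteq> y"
    have "y \<in> X" "le y x" using y by (simp_all add: interval_below_def)
    then have "le w x" using trans_le[OF w _ x] between by blast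
    then have wI: "w \<in> ?I" using w zero_le by (simp add: interval_below_def)
    have "f z \<subseteq> f w" "f w \<subseteq> f y" using f_iso[OF z wI] f_iso[OF wI y] between by simp_all
    moreover have "f w \<noteq> f z" "f w \<noteq> f y"
      using inj_onD[OF inj _ wI z] inj_onD[OF inj _ wI y] between by blast+
    ultimately show False using fy by (cases "b \<in> f w") auto
  qed
  have "le z y" using f_iso[OF z y] fy by blast
  moreover have "z \<noteq> y" using fy b by blast
  moreover have "z \<in> X" "y \<in> X" using y z by (simp_all add: interval_below_def)
  ultimately show ?thesis
    unfolding covers_def using no_between by blast
qed

lemma rho_eq_card: "y \<in> interval_below X le zero x \<Longrightarrow> rho y = card (f y)"
proof (induction "card (f y)" arbitrary: y rule: less_induct)
  case less
  let ?I = "interval_below X le zero x"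
  have inj: "inj_on f ?I" using f by (rule bij_betw_imp_inj_on)
  have zero_in_I: "zero \<in> ?I" using zero_in_X x zero_le by (auto simp: interval_below_def)
  have fy: "f y \<subseteq> {..<k}" using f less.prems by (auto simp: bij_betw_def)
  show ?case
  proof (cases "f y = {}")
    case True
    have "f zero \<subseteq> f y"
      using f_iso[OF zero_in_I less.prems] zero_le less.prems by (simp add: interval_below_def)
    then have "y = zero"
      using True inj_onD[OF inj _ zero_in_I less.prems] by auto
    then show ?thesis using True rho_zero by simp
  next
    case False
    then obtain b where b: "b \<in> f y" by blast
    have "f y - {b} \<in> f ` ?I" using f fy by (auto simp: bij_betw_def)
    then obtain z where z: "z \<in> ?I" and fz: "f z = f y - {b}" by (metis imageE)
    then have fy_z: "f y = insert b (f z)" "b \<notin> f z" using b by auto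
    have finite: "finite (f z)" using fy fz by (auto intro: finite_subset[OF _ finite_lessThan])
    then have card_fy: "card (f y) = Suc (card (f z))" using fy_z by simp
    then have "rho z = card (f z)" using z by (intro less.hyps) simp_all
    moreover have "covers X le z y"
      using less.prems z fy_z by (rule covers_in_boolean_interval)
    ultimately show ?thesis
      using rho_cover card_fy by simp
  qed
qed

end

lemma rho_strict_mono:
  assumes a: "a \<in> X" and b: "b \<in> X" "b \<noteq> one" and ab: "le a b" "a \<noteq> b"
  shows "rho a < rho b"
proof -
  let ?I = "interval_below X le zero b"
  obtain f where f: "bij_betw f ?I (Pow {..<rho b})"
    and iso: "\<And>y z. y \<in> ?I \<Longrightarrow> z \<in> ?I \<Longrightarrow> le y z \<longleftrightarrow> f y \<subseteq> f z"
    using boolean_below[OF b] unfolding boolean_interval_def by blast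
  have aI: "a \<in> ?I" and bI: "b \<in> ?I"
    using a b ab zero_le refl_le by (auto simp: interval_below_def)
  have "f a \<subset> f b"
    using iso[OF aI bI] ab inj_onD[OF bij_betw_imp_inj_on[OF f] _ aI bI] by auto
  moreover have "finite (f b)"
    using bij_betwE[OF f] bI by (meson PowD finite_lessThan finite_subset)
  ultimately show ?thesis
    using rho_eq_card[OF b(1) f iso] aI bI by (simp add: psubset_card_mono)
qed

lemma flag_f_empty: "flag_f X le zero one rho {} = 1"
  by (simp add: flag_f_eq_card_rank_chains rank_chains_empty)

lemma card_rank_chains_below:
  assumes x: "x \<in> X" "rho x = k" and k: "k \<le> n" and T: "T \<subseteq> {1..<k}"
  shows "card (rank_chains le {a \<in> X - {zero, one}. le a x} rho T) = boolean_flag_f k T"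
proof -
  let ?I = "interval_below X le zero x"
  have "x \<noteq> one" using x k rho_one by auto
  then obtain f where f: "bij_betw f ?I (Pow {..<k})"
    and iso: "\<And>y z. y \<in> ?I \<Longrightarrow> z \<in> ?I \<Longrightarrow> le y z \<longleftrightarrow> f y \<subseteq> f z"
    using boolean_below[OF x(1)] x(2) unfolding boolean_interval_def by blast
  have "rank_chains le {a \<in> X - {zero, one}. le a x} rho T = rank_chains le ?I rho T"
    using T k rho_zero rho_one zero_le by (intro rank_chains_cong) (auto simp: interval_below_def)
  moreover have "bij_betw (image f) (rank_chains le ?I rho T) (rank_chains (\<subseteq>) (Pow {..<k}) card T)"
    using f iso rho_eq_card[OF x(1) f iso] by (intro bij_betw_rank_chains) auto
  ultimately show ?thesis
    unfolding boolean_flag_f_def by (simp add: bij_betw_same_card)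
qed

lemma flag_f_insert:
  assumes k: "1 \<le> k" "k \<le> n" and T: "T \<subseteq> {1..<k}"
  shows "flag_f X le zero one rho (insert k T) = fvec X rho k * boolean_flag_f k T"
proof -
  let ?A = "X - {zero, one}"
  have "flag_f X le zero one rho (insert k T)
      = (\<Sum>x\<in>{x \<in> ?A. rho x = k}. card (rank_chains le {a \<in> ?A. le a x} rho T))"
    unfolding flag_f_eq_card_rank_chains
  proof (rule card_rank_chains_insert)
    show "finite T" using T by (rule finite_subset) simp
  qed (use T finite_X refl_le rho_strict_mono in auto)
  also have "\<dots> = (\<Sum>x\<in>{x \<in> ?A. rho x = k}. boolean_flag_f k T)"
    using k T by (intro sum.cong refl card_rank_chains_below) auto
  also have "{x \<in> ?A. rho x = k} = {x \<in> X. rho x = k}"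
    using k rho_zero rho_one by auto
  finally show ?thesis
    using k by (simp add: fvec_def)
qed

end

theorem mainTheorem3:
  fixes X :: "'a set" and le :: "'a \<Rightarrow> 'a \<Rightarrow> bool" and zero one :: 'a
    and rho :: "'a \<Rightarrow> nat" and n :: nat
  assumes "simplicial_poset X le zero one rho n"
  shows "Theta (abindex X le zero one rho n) = qfact n * hpoly X rho n"
proof -
  interpret simplicial X le zero one rho n
    using assms by (rule simplicial.intro)
  have "Theta (abindex X le zero one rho n)
      = (\<Sum>S\<in>Pow {1..n}. of_nat (flag_f X le zero one rho S) * flag_weight n S)"
    by (rule Theta_abindex)
  also have "\<dots> = qfact n * h_sum (fvec X rho) n"
  proof (rule sum_flag_weight_eq_qfact_h_sum[where M = n])
    show "fvec X rho 0 = 1" by (simp add: fvec_def)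
  qed (use flag_f_empty flag_f_insert sum_boolean_flag_f_flag_weight in auto)
  also have "\<dots> = qfact n * hpoly X rho n"
    by (simp add: hpoly_eq_h_sum)
  finally show ?thesis .
qed

end
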